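(* Let $K$ be a scattered compact Hausdorff space and let $X$ and $Y$ be real Banach spaces with $Y$ separable. If $Y$ embeds isomorphically into $C(K,X)$, then there exist a countable metrizable compact space $K_0$ and a separable closed subspace $X_0\subseteq X$ such that $Y$ embeds isomorphically into $C(K_0,X_0)$ and $C(K_0,X_0)$ embeds isomorphically into $C(K,X)$.
   Context: For a compact Hausdorff space $K$ and a real Banach space $X$, $C(K,X)$ denotes the Banach space of continuous functions $f:K\to X$ with the norm $\|f\|=\sup_{x\in K}\|f(x)\|$. An isomorphic embedding is a linear $T$ with $A\|u\|\le\|Tu\|\le B\|u\|$ for some $A,B>0$. A topological space is scattered if every nonempty subset has an isolated point. *)

theory Defs
  imports "HOL-Analysis.Analysis"
begin

definition scattered_space :: "'a topology \<Rightarrow> bool" where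
  "scattered_space K \<longleftrightarrow>
     (\<forall>S. S \<subseteq> topspace K \<and> S \<noteq> {} \<longrightarrow> (\<exists>x\<in>S. \<exists>U. openin K U \<and> U \<inter> S = {x}))"

text \<open>C(K,X0): continuous functions on the carrier of K with values in X0,
  extended by 0 outside the carrier (so that equality of elements is equality of functions).\<close>
definition Cfun :: "'k topology \<Rightarrow> 'x::real_normed_vector set \<Rightarrow> ('k \<Rightarrow> 'x) set" where
  "Cfun K X0 = {f. continuous_map K euclidean f \<and> f ` topspace K \<subseteq> X0 \<and>
                   (\<forall>t. t \<notin> topspace K \<longrightarrow> f t = 0)}"

definition Cnorm :: "'k topology \<Rightarrow> ('k \<Rightarrow> 'x::real_normed_vector) \<Rightarrow> real" where
  "Cnorm K f = (if topspace K = {} then 0 else (SUP t\<in>topspace K. norm (f t)))"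

definition embeds_into_C ::
  "('y::real_normed_vector \<Rightarrow> 'k \<Rightarrow> 'x::real_normed_vector) \<Rightarrow> 'k topology \<Rightarrow> 'x set \<Rightarrow> bool" where
  "embeds_into_C T K X0 \<longleftrightarrow>
     (\<forall>u. T u \<in> Cfun K X0) \<and>
     (\<forall>u v. T (u + v) = (\<lambda>t. T u t + T v t)) \<and>
     (\<forall>c u. T (c *\<^sub>R u) = (\<lambda>t. c *\<^sub>R T u t)) \<and>
     (\<exists>A B. 0 < A \<and> 0 < B \<and> (\<forall>u. A * norm u \<le> Cnorm K (T u) \<and> Cnorm K (T u) \<le> B * norm u))"

definition C_embeds_into_C ::
  "(('a \<Rightarrow> 'x::real_normed_vector) \<Rightarrow> ('k \<Rightarrow> 'x)) \<Rightarrow> 'a topology \<Rightarrow> 'x set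
     \<Rightarrow> 'k topology \<Rightarrow> 'x set \<Rightarrow> bool" where
  "C_embeds_into_C S K0 X0 K X1 \<longleftrightarrow>
     S ` Cfun K0 X0 \<subseteq> Cfun K X1 \<and>
     (\<forall>f\<in>Cfun K0 X0. \<forall>g\<in>Cfun K0 X0. S (\<lambda>t. f t + g t) = (\<lambda>s. S f s + S g s)) \<and>
     (\<forall>c. \<forall>f\<in>Cfun K0 X0. S (\<lambda>t. c *\<^sub>R f t) = (\<lambda>s. c *\<^sub>R S f s)) \<and>
     (\<exists>A B. 0 < A \<and> 0 < B \<and>
        (\<forall>f\<in>Cfun K0 X0. A * Cnorm K0 f \<le> Cnorm K (S f) \<and> Cnorm K (S f) \<le> B * Cnorm K0 f))"

end

theory Submission
  imports Defs
begin

(* Fix a dense sequence (u_n) in Y and map t \<in> K to q t = (T u_n (t))_n. Points with the same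
   image cannot be separated by any T u, and every value T u t lies in the closure X0 of the
   rational span of the countably many values T u_n (t), a closed separable subspace of X.
   Since K is compact and scattered, the compact metric set q(K) is countable: otherwise its
   condensation points would form a nonempty dense-in-itself set P, and a maximal open V with
   P \<subseteq> q(K - V) could be enlarged by an isolated point of K - V. Hence K0 = q(K), coded on the
   naturals, is a countable compact metric space; T factors through the quotient K \<rightarrow> K0, and
   composition with this quotient embeds C(K0,X0) isometrically into C(K,X). *)

lemma countable_points_with_countable_ball:
  fixes M :: "'a::metric_space set"
  assumes "compact M" and "r > 0"
  shows "countable {p\<in>M. countable (ball p r \<inter> M)}" (is "countable ?A")
proof -
  obtain D where D: "finite D" "M \<subseteq> (\<Union>x\<in>D. ball x (r/2))"
    using seq_compact_imp_totally_bounded[OF compact_imp_seq_compact[OF assms(1)]] \<open>r > 0\<close> by (meson half_gt_zero)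
  have piece: "countable (ball x (r/2) \<inter> ?A)" for x
  proof (cases "ball x (r/2) \<inter> ?A = {}")
    case False
    then obtain p where p: "p \<in> ball x (r/2)" "countable (ball p r \<inter> M)" by blast
    have "ball x (r/2) \<inter> ?A \<subseteq> ball p r \<inter> M"
    proof
      fix y assume y: "y \<in> ball x (r/2) \<inter> ?A"
      have "dist p y \<le> dist x p + dist x y" using dist_triangle[of p y x] by (simp add: dist_commute)
      with p(1) y show "y \<in> ball p r \<inter> M" by simp
    qed
    then show ?thesis using p(2) countable_subset by blast
  qed simp
  have "?A \<subseteq> (\<Union>x\<in>D. ball x (r/2) \<inter> ?A)" using D(2) by blast
  moreover have "countable (\<Union>x\<in>D. ball x (r/2) \<inter> ?A)"
    using countable_finite[OF D(1)] piece by (rule countable_UN)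
  ultimately show ?thesis by (rule countable_subset)
qed

definition condensation_points :: "'a::metric_space set \<Rightarrow> 'a set" where
  "condensation_points M = {p\<in>M. \<forall>e>0. uncountable (ball p e \<inter> M)}"

lemma countable_diff_condensation_points:
  fixes M :: "'a::metric_space set"
  assumes "compact M"
  shows "countable (M - condensation_points M)"
proof -
  have "M - condensation_points M = {p\<in>M. \<exists>e>0. countable (ball p e \<inter> M)}"
    by (auto simp: condensation_points_def)
  also have "\<dots> \<subseteq> (\<Union>n. {p\<in>M. countable (ball p (1/Suc n) \<inter> M)})"
  proof clarify
    fix p e assume "p \<in> M" "e > 0" "countable (ball p e \<inter> M)"
    moreover obtain n where "1 / real (Suc n) < e" using \<open>e > 0\<close> by (meson nat_approx_posE)
    ultimately have "countable (ball p (1/Suc n) \<inter> M)"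
      using subset_ball[of "1/Suc n" e p] by (meson Int_mono countable_subset less_imp_le order_refl)
    then show "p \<in> (\<Union>n. {p\<in>M. countable (ball p (1/Suc n) \<inter> M)})" using \<open>p \<in> M\<close> by blast
  qed
  finally have "M - condensation_points M \<subseteq> (\<Union>n. {p\<in>M. countable (ball p (1/Suc n) \<inter> M)})" .
  moreover have "countable (\<Union>n. {p\<in>M. countable (ball p (1/Suc n) \<inter> M)})"
    using countable_points_with_countable_ball[OF assms] by (intro countable_UN) auto
  ultimately show ?thesis by (rule countable_subset)
qed

lemma islimpt_condensation_points:
  fixes M :: "'a::metric_space set"
  assumes "compact M" and "p \<in> condensation_points M"
  shows "p islimpt condensation_points M"
  unfolding islimpt_approachable
proof (intro allI impI)
  fix e :: real assume "e > 0"
  define P where "P = condensation_points M"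
  have "ball p e \<inter> M \<subseteq> insert p (M - P) \<union> {p'\<in>P. p' \<noteq> p \<and> dist p' p < e}"
    by (auto simp: dist_commute)
  moreover have "countable (insert p (M - P))"
    using countable_diff_condensation_points[OF assms(1)] by (simp add: P_def)
  moreover have "uncountable (ball p e \<inter> M)"
    using assms(2) \<open>e > 0\<close> by (simp add: condensation_points_def)
  ultimately have "{p'\<in>P. p' \<noteq> p \<and> dist p' p < e} \<noteq> {}"
    by (metis Un_empty_right countable_subset)
  then show "\<exists>p'\<in>condensation_points M. p' \<noteq> p \<and> dist p' p < e" by (auto simp: P_def)
qed

lemma image_diff_Union_chain:
  fixes q :: "'k \<Rightarrow> 'm::t1_space"
  assumes "compact_space K" and "continuous_map K euclidean q"
    and "\<forall>V\<in>C. openin K V" and "subset.chain UNIV C"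
    and "p \<in> q ` topspace K" and "\<forall>V\<in>C. p \<in> q ` (topspace K - V)"
  shows "p \<in> q ` (topspace K - \<Union>C)"
proof (cases "C = {}")
  case False
  define Q where "Q = {t \<in> topspace K. q t \<in> {p}}"
  have "closedin K Q"
    unfolding Q_def using assms(2) by (rule closedin_continuous_map_preimage) simp
  then have closed: "\<forall>S\<in>(\<lambda>V. Q - V) ` C. closedin K S"
    using assms(3) by blast
  have fip: "\<Inter>((\<lambda>V. Q - V) ` C') \<noteq> {}" if "finite C'" "C' \<subseteq> C" for C'
  proof (cases "C' = {}")
    case False
    have "subset.chain UNIV C'" using assms(4) \<open>C' \<subseteq> C\<close> by (auto simp: subset_chain_def)
    then have "\<Union>C' \<in> C'" by (rule Union_in_chain[OF \<open>finite C'\<close> False])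
    then have "p \<in> q ` (topspace K - \<Union>C')" using assms(6) \<open>C' \<subseteq> C\<close> by blast
    then have "Q - \<Union>C' \<noteq> {}" by (auto simp: Q_def)
    then obtain t where "t \<in> Q" "t \<notin> \<Union>C'" by blast
    then have "t \<in> \<Inter>((\<lambda>V. Q - V) ` C')" by auto
    then show ?thesis by (metis empty_iff)
  qed simp
  have "\<Inter>\<F> \<noteq> {}" if "finite \<F>" "\<F> \<subseteq> (\<lambda>V. Q - V) ` C" for \<F>
    using finite_subset_image[OF that] fip by metis
  then obtain t where "t \<in> \<Inter>((\<lambda>V. Q - V) ` C)"
    using assms(1) closed unfolding compact_space_fip by (metis ex_in_conv)
  then show ?thesis using False by (auto simp: Q_def)
qed (use assms(5) in simp)

lemma image_diff_isolated_point:
  fixes q :: "'k \<Rightarrow> 'm::metric_space"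
  assumes "compact_space K" and "continuous_map K euclidean q"
    and "closedin K (G - {x})" and "P \<subseteq> q ` G" and "\<And>p. p \<in> P \<Longrightarrow> p islimpt P"
  shows "P \<subseteq> q ` (G - {x})"
proof
  fix p assume "p \<in> P"
  have "compact (q ` (G - {x}))"
    using image_compactin[OF closedin_compact_space[OF assms(1,3)] assms(2)] by simp
  then have closed: "closed (q ` (G - {x}))" by (rule compact_imp_closed)
  have "P \<subseteq> insert (q x) (q ` (G - {x}))" using assms(4) by blast
  then have "p islimpt q ` (G - {x})"
    using assms(5)[OF \<open>p \<in> P\<close>] islimpt_insert islimpt_subset by metis
  then show "p \<in> q ` (G - {x})" using closed closed_limpt by blast
qed

lemma scattered_image_dense_in_itself_empty:
  fixes q :: "'k \<Rightarrow> 'm::metric_space"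
  assumes "compact_space K" and "scattered_space K" and "continuous_map K euclidean q"
    and "P \<subseteq> q ` topspace K" and "\<And>p. p \<in> P \<Longrightarrow> p islimpt P"
  shows "P = {}"
proof (rule ccontr)
  assume "P \<noteq> {}"
  define \<V> where "\<V> = {V. openin K V \<and> P \<subseteq> q ` (topspace K - V)}"
  have "\<exists>V0\<in>\<V>. \<forall>V\<in>\<V>. V0 \<subseteq> V \<longrightarrow> V = V0"
  proof (rule subset_Zorn')
    fix C assume "subset.chain \<V> C"
    then have opens: "\<forall>V\<in>C. openin K V" and "subset.chain UNIV C"
      and covers: "\<forall>V\<in>C. P \<subseteq> q ` (topspace K - V)"
      by (auto simp: \<V>_def subset_chain_def)
    have "P \<subseteq> q ` (topspace K - \<Union>C)"
    proof
      fix p assume "p \<in> P"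
      show "p \<in> q ` (topspace K - \<Union>C)"
        by (rule image_diff_Union_chain[OF assms(1,3) opens \<open>subset.chain UNIV C\<close>])
           (use \<open>p \<in> P\<close> assms(4) covers in blast)+
    qed
    with opens show "\<Union>C \<in> \<V>" by (auto simp: \<V>_def)
  qed
  then obtain V0 where "V0 \<in> \<V>" and maximal: "\<And>V. V \<in> \<V> \<Longrightarrow> V0 \<subseteq> V \<Longrightarrow> V = V0"
    by blast
  define G where "G = topspace K - V0"
  have "G \<noteq> {}" using \<open>V0 \<in> \<V>\<close> \<open>P \<noteq> {}\<close> by (auto simp: \<V>_def G_def)
  then obtain x U where "x \<in> G" "openin K U" "U \<inter> G = {x}"
    using assms(2) unfolding scattered_space_def G_def by blast
  have "openin K (V0 \<union> U)" using \<open>V0 \<in> \<V>\<close> \<open>openin K U\<close> by (auto simp: \<V>_def)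
  moreover have eq: "topspace K - (V0 \<union> U) = G - {x}" using \<open>U \<inter> G = {x}\<close> by (auto simp: G_def)
  ultimately have "closedin K (G - {x})" by (metis closedin_diff closedin_topspace)
  then have "P \<subseteq> q ` (G - {x})"
    using image_diff_isolated_point[OF assms(1,3)] assms(5) \<open>V0 \<in> \<V>\<close> by (simp add: \<V>_def G_def)
  with \<open>openin K (V0 \<union> U)\<close> have "V0 \<union> U \<in> \<V>" by (simp add: \<V>_def eq)
  then have "V0 \<union> U = V0" using maximal by blast
  then show False using \<open>x \<in> G\<close> \<open>U \<inter> G = {x}\<close> by (auto simp: G_def)
qed

theorem countable_image_scattered_space:
  fixes q :: "'k \<Rightarrow> 'm::metric_space"
  assumes "compact_space K" and "scattered_space K" and "continuous_map K euclidean q"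
  shows "countable (q ` topspace K)"
proof -
  define M where "M = q ` topspace K"
  have "compact M"
    using image_compactin[OF _ assms(3)] assms(1) unfolding compact_space_def M_def by simp
  have "condensation_points M \<subseteq> q ` topspace K"
    by (auto simp: condensation_points_def M_def)
  then have "condensation_points M = {}"
    using scattered_image_dense_in_itself_empty[OF assms]
      islimpt_condensation_points[OF \<open>compact M\<close>] by blast
  then show ?thesis
    using countable_diff_condensation_points[OF \<open>compact M\<close>] by (simp add: M_def)
qed

lemma homeomorphic_map_from_nat_topology:
  assumes "countable (topspace X)"
  obtains K0 :: "nat topology" and \<phi> where "homeomorphic_map K0 X \<phi>"
proof
  define \<phi> where "\<phi> = from_nat_into (topspace X)"
  define e where "e = to_nat_on (topspace X)"
  define K0 where "K0 = pullback_topology (e ` topspace X) \<phi> X"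
  have \<phi>e: "\<phi> (e x) = x" if "x \<in> topspace X" for x
    using assms that by (simp add: \<phi>_def e_def)
  have topK0: "topspace K0 = e ` topspace X"
    using \<phi>e by (auto simp: K0_def topspace_pullback_topology)
  have "continuous_map K0 X (id \<circ> \<phi>)"
    unfolding K0_def by (rule continuous_map_pullback[OF continuous_map_id])
  moreover have "continuous_map X K0 e"
    unfolding K0_def
    by (rule continuous_map_pullback') (auto intro: continuous_map_eq[OF continuous_map_id] simp: \<phi>e)
  ultimately have "homeomorphic_maps K0 X \<phi> e"
    unfolding homeomorphic_maps_def using \<phi>e topK0 by auto
  then show "homeomorphic_map K0 X \<phi>"
    using homeomorphic_map_maps by blast
qed

lemma quotient_map_onto_countable_metrizable:
  fixes q :: "'k \<Rightarrow> 'm::metric_space"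
  assumes "compact_space K" and "continuous_map K euclidean q" and "countable (q ` topspace K)"
  obtains K0 :: "nat topology" and h where "quotient_map K K0 h"
    and "compact_space K0" and "metrizable_space K0" and "countable (topspace K0)"
    and "\<And>s t. s \<in> topspace K \<Longrightarrow> t \<in> topspace K \<Longrightarrow> h s = h t \<longleftrightarrow> q s = q t"
proof -
  define M where "M = q ` topspace K"
  have "countable (topspace (subtopology euclidean M))" using assms(3) by (simp add: M_def)
  then obtain K0 :: "nat topology" and \<phi> where "homeomorphic_map K0 (subtopology euclidean M) \<phi>"
    by (rule homeomorphic_map_from_nat_topology)
  then obtain \<psi> where "homeomorphic_maps K0 (subtopology euclidean M) \<phi> \<psi>"
    using homeomorphic_map_maps by blast
  then have \<psi>: "homeomorphic_map (subtopology euclidean M) K0 \<psi>"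
    using homeomorphic_map_maps homeomorphic_maps_sym by blast
  then have homeo: "K0 homeomorphic_space subtopology euclidean M"
    using homeomorphic_space_sym homeomorphic_space by blast
  have "continuous_map K (subtopology euclidean M) q"
    using assms(2) by (auto simp: continuous_map_in_subtopology M_def)
  then have cont: "continuous_map K K0 (\<psi> \<circ> q)"
    using \<psi> continuous_map_compose homeomorphic_imp_continuous_map by blast
  have "compact M"
    using image_compactin[OF _ assms(2)] assms(1) unfolding compact_space_def M_def by simp
  then have "compact_space K0"
    using homeo homeomorphic_compact_space compact_space_subtopology by (metis compactin_euclidean_iff)
  moreover have "metrizable_space K0"
    using homeo homeomorphic_metrizable_space metrizable_space_subtopology metrizable_space_euclidean
    by blast
  moreover have "(\<psi> \<circ> q) ` topspace K = topspace K0"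
    using homeomorphic_imp_surjective_map[OF \<psi>] by (simp add: image_comp M_def)
  moreover have "quotient_map K K0 (\<psi> \<circ> q)"
    by (rule continuous_imp_quotient_map[OF cont assms(1)])
       (use calculation metrizable_imp_Hausdorff_space in auto)
  moreover have "countable (topspace K0)"
    using \<open>(\<psi> \<circ> q) ` topspace K = topspace K0\<close> assms(3) by (metis countable_image image_comp)
  moreover have "(\<psi> \<circ> q) s = (\<psi> \<circ> q) t \<longleftrightarrow> q s = q t" if "s \<in> topspace K" "t \<in> topspace K" for s t
    using homeomorphic_imp_injective_map[OF \<psi>] that by (auto simp: M_def inj_on_def)
  ultimately show ?thesis using that by blast
qed

lemma countable_rational_span:
  fixes W :: "'x::real_vector set"
  assumes "countable W"
  obtains Q where "countable Q" and "W \<subseteq> Q" and "0 \<in> Q"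
    and "\<And>a b r. a \<in> Q \<Longrightarrow> b \<in> Q \<Longrightarrow> a + of_rat r *\<^sub>R b \<in> Q"
proof
  define F :: "'x \<times> 'x \<times> rat \<Rightarrow> 'x" where "F = (\<lambda>(a, b, r). a + of_rat r *\<^sub>R b)"
  define Qs where "Qs = rec_nat (insert 0 W) (\<lambda>_ S. F ` (S \<times> S \<times> UNIV))"
  have Qs0: "Qs 0 = insert 0 W" and QsS: "Qs (Suc k) = F ` (Qs k \<times> Qs k \<times> UNIV)" for k
    by (simp_all add: Qs_def)
  have "countable (Qs k)" for k
    by (induction k) (use assms in \<open>simp_all add: Qs0 QsS\<close>)
  then show "countable (\<Union>k. Qs k)" by auto
  show "W \<subseteq> (\<Union>k. Qs k)" "0 \<in> (\<Union>k. Qs k)" using Qs0 by auto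
  have "a \<in> Qs (Suc k)" if "a \<in> Qs k" for a k
    using image_eqI[of a F "(a, a, 0)"] that by (simp add: QsS F_def)
  then have mono: "Qs i \<subseteq> Qs j" if "i \<le> j" for i j
    using lift_Suc_mono_le[of Qs, OF _ that] by blast
  fix a b r assume "a \<in> (\<Union>k. Qs k)" "b \<in> (\<Union>k. Qs k)"
  then obtain i j where "a \<in> Qs i" "b \<in> Qs j" by blast
  then have "a \<in> Qs (max i j)" "b \<in> Qs (max i j)" using mono[of i "max i j"] mono[of j "max i j"] by auto
  then have "F (a, b, r) \<in> Qs (Suc (max i j))" by (simp add: QsS)
  then show "a + of_rat r *\<^sub>R b \<in> (\<Union>k. Qs k)" by (auto simp: F_def)
qed

lemma subspace_closure_rational_span:
  fixes Q :: "'x::real_normed_vector set"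
  assumes "0 \<in> Q" and "\<And>a b r. a \<in> Q \<Longrightarrow> b \<in> Q \<Longrightarrow> a + of_rat r *\<^sub>R b \<in> Q"
  shows "subspace (closure Q)"
proof -
  define G where "G = (\<lambda>z::'x \<times> 'x \<times> real. fst z + snd (snd z) *\<^sub>R fst (snd z))"
  have "G ` (Q \<times> Q \<times> \<rat>) \<subseteq> closure Q"
    using assms(2) closure_subset by (fastforce simp: G_def elim!: Rats_cases)
  moreover have "continuous_on (closure (Q \<times> Q \<times> \<rat>)) G"
    unfolding G_def by (intro continuous_intros)
  ultimately have "G ` closure (Q \<times> Q \<times> \<rat>) \<subseteq> closure Q"
    by (intro image_closure_subset) auto
  then have lin: "x + c *\<^sub>R y \<in> closure Q" if "x \<in> closure Q" "y \<in> closure Q" for x y c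
    using that by (force simp: G_def closure_Times Rats_closure_real)
  have "0 \<in> closure Q" using assms(1) closure_subset by blast
  then show ?thesis
    unfolding subspace_def using lin[of _ _ 1] lin[of 0] by auto
qed

lemma separable_space_closure:
  fixes Q :: "'a::metric_space set"
  assumes "countable Q"
  shows "separable_space (subtopology euclidean (closure Q))"
  unfolding separable_space_def
proof (intro exI conjI)
  show "Q \<subseteq> topspace (subtopology euclidean (closure Q))" using closure_subset by simp
  have "closure Q \<inter> Q = Q" using closure_subset by blast
  then show "subtopology euclidean (closure Q) closure_of Q = topspace (subtopology euclidean (closure Q))"
    by (simp add: closure_of_subtopology euclidean_closure_of)
qed (rule assms)

lemma closed_separable_subspace_superset:
  fixes W :: "'x::real_normed_vector set"
  assumes "countable W"
  obtains X0 where "subspace X0" and "closed X0" and "separable_space (subtopology euclidean X0)"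
    and "W \<subseteq> X0"
proof -
  obtain Q where "countable Q" "W \<subseteq> Q" "0 \<in> Q"
    and "\<And>a b r. a \<in> Q \<Longrightarrow> b \<in> Q \<Longrightarrow> a + of_rat r *\<^sub>R b \<in> Q"
    using countable_rational_span[OF assms] by blast
  then show ?thesis
    using that[of "closure Q"] subspace_closure_rational_span separable_space_closure closure_subset
    by blast
qed

lemma Cnorm_eqI:
  assumes "(\<lambda>t. norm (f t)) ` topspace K = (\<lambda>t. norm (g t)) ` topspace K'"
  shows "Cnorm K f = Cnorm K' g"
proof -
  have "topspace K = {} \<longleftrightarrow> topspace K' = {}" using assms by (metis image_is_empty)
  then show ?thesis unfolding Cnorm_def using assms by simp
qed

lemma norm_le_Cnorm:
  assumes "continuous_map K euclidean f" and "compact_space K" and "t \<in> topspace K"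
  shows "norm (f t) \<le> Cnorm K f"
proof -
  have "compact (f ` topspace K)"
    using image_compactin[OF _ assms(1)] assms(2) unfolding compact_space_def by simp
  then have "bdd_above ((\<lambda>t. norm (f t)) ` topspace K)"
    by (auto dest!: compact_imp_bounded simp: bounded_iff bdd_above_def)
  then show ?thesis using assms(3) unfolding Cnorm_def by (auto intro: cSUP_upper)
qed

lemma embeds_into_C_continuous:
  assumes "embeds_into_C T K X"
  shows "continuous_map K euclidean (T u)"
  using assms unfolding embeds_into_C_def Cfun_def by blast

lemma embeds_into_C_diff:
  assumes "embeds_into_C T K X"
  shows "T (u - v) = (\<lambda>t. T u t - T v t)"
proof -
  have "T (u + (-1) *\<^sub>R v) = (\<lambda>t. T u t + (-1) *\<^sub>R T v t)"
    using assms unfolding embeds_into_C_def by metis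
  then show ?thesis by simp
qed

lemma embeds_into_C_lipschitz:
  assumes "embeds_into_C T K X" and "compact_space K"
  obtains B where "B > 0" and "\<And>u v t. t \<in> topspace K \<Longrightarrow> norm (T u t - T v t) \<le> B * dist u v"
proof -
  obtain B where "B > 0" and bound: "\<And>w. Cnorm K (T w) \<le> B * norm w"
    using assms(1) unfolding embeds_into_C_def by blast
  have "norm (T u t - T v t) \<le> B * dist u v" if "t \<in> topspace K" for u v t
  proof -
    have "norm (T (u - v) t) \<le> Cnorm K (T (u - v))"
      by (rule norm_le_Cnorm[OF embeds_into_C_continuous[OF assms(1)] assms(2) that])
    then show ?thesis
      using bound[of "u - v"] by (simp add: embeds_into_C_diff[OF assms(1)] dist_norm)
  qed
  with \<open>B > 0\<close> that show ?thesis by blast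
qed

lemma embeds_into_C_uniform_approx:
  assumes "embeds_into_C T K X" and "compact_space K" and "closure (range d) = UNIV" and "e > 0"
  obtains n where "\<And>t. t \<in> topspace K \<Longrightarrow> norm (T u t - T (d n) t) < e"
proof -
  obtain B where "B > 0" and lip: "\<And>u v t. t \<in> topspace K \<Longrightarrow> norm (T u t - T v t) \<le> B * dist u v"
    using embeds_into_C_lipschitz[OF assms(1,2)] by blast
  have "u \<in> closure (range d)" using assms(3) by simp
  then obtain n where "dist (d n) u < e / B"
    using closure_approachable \<open>B > 0\<close> \<open>e > 0\<close> by (metis divide_pos_pos rangeE)
  then have "B * dist u (d n) < e"
    using \<open>B > 0\<close> by (simp add: dist_commute field_simps)
  then show ?thesis using lip that by (meson le_less_trans)
qed

lemma embeds_into_C_eq_if_dense_eq: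
  assumes "embeds_into_C T K X" and "compact_space K" and "closure (range d) = UNIV"
    and "s \<in> topspace K" and "t \<in> topspace K" and "\<And>n. T (d n) s = T (d n) t"
  shows "T u s = T u t"
proof -
  have "norm (T u s - T u t) \<le> e" if "e > 0" for e
  proof -
    obtain n where n: "\<And>t. t \<in> topspace K \<Longrightarrow> norm (T u t - T (d n) t) < e/2"
      using embeds_into_C_uniform_approx[OF assms(1-3) half_gt_zero[OF \<open>e > 0\<close>]] by blast
    have "norm (T u s - T u t) \<le> norm (T u s - T (d n) s) + norm (T u t - T (d n) t)"
      using norm_triangle_ineq4[of "T u s - T (d n) s" "T u t - T (d n) t"] assms(6) by simp
    also have "\<dots> < e" using n[OF assms(4)] n[OF assms(5)] by simp
    finally show ?thesis by simp
  qed
  then show ?thesis using field_le_epsilon[of "norm (T u s - T u t)" 0] by simp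
qed

lemma embeds_into_C_in_closure_dense:
  assumes "embeds_into_C T K X" and "compact_space K" and "closure (range d) = UNIV"
    and "t \<in> topspace K"
  shows "T u t \<in> closure (range (\<lambda>n. T (d n) t))"
  unfolding closure_approachable
proof (intro allI impI)
  fix e :: real assume "e > 0"
  then obtain n where "norm (T u t - T (d n) t) < e"
    using embeds_into_C_uniform_approx[OF assms(1-3)] assms(4) by metis
  then show "\<exists>y\<in>range (\<lambda>n. T (d n) t). dist y (T u t) < e"
    by (auto simp: dist_norm norm_minus_commute)
qed

lemma separable_space_dense_sequence:
  assumes "separable_space (euclidean :: 'a topology)"
  obtains d :: "nat \<Rightarrow> 'a::topological_space" where "closure (range d) = UNIV"
proof -
  obtain D :: "'a set" where "countable D" "closure D = UNIV"
    using assms unfolding separable_space_def by (auto simp: euclidean_closure_of)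
  moreover have "D \<noteq> {}" using \<open>closure D = UNIV\<close> by auto
  ultimately show ?thesis using that range_from_nat_into by metis
qed

lemma embeds_into_C_through_quotient:
  fixes T :: "'y::real_normed_vector \<Rightarrow> 'k \<Rightarrow> 'x::real_normed_vector" and K0 :: "'a topology"
  assumes "embeds_into_C T K X" and "quotient_map K K0 h"
    and "\<And>u s t. s \<in> topspace K \<Longrightarrow> t \<in> topspace K \<Longrightarrow> h s = h t \<Longrightarrow> T u s = T u t"
    and "\<And>u t. t \<in> topspace K \<Longrightarrow> T u t \<in> X0"
  shows "\<exists>T0 :: 'y \<Rightarrow> 'a \<Rightarrow> 'x. embeds_into_C T0 K0 X0"
proof -
  have add: "T (u + v) = (\<lambda>t. T u t + T v t)" and scale: "T (c *\<^sub>R u) = (\<lambda>t. c *\<^sub>R T u t)"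
    and "\<exists>A B. 0 < A \<and> 0 < B \<and> (\<forall>u. A * norm u \<le> Cnorm K (T u) \<and> Cnorm K (T u) \<le> B * norm u)"
    for u v c
    using assms(1) unfolding embeds_into_C_def by blast+
  have surj: "h ` topspace K = topspace K0" using assms(2) by (rule quotient_imp_surjective_map)
  define T0 where "T0 u n = (if n \<in> topspace K0 then T u (SOME t. t \<in> topspace K \<and> h t = n) else 0)"
    for u n
  have T0h: "T0 u (h t) = T u t" if "t \<in> topspace K" for u t
  proof -
    define s where "s = (SOME s. s \<in> topspace K \<and> h s = h t)"
    have "s \<in> topspace K \<and> h s = h t" unfolding s_def by (rule someI[of _ t]) (simp add: that)
    then have "T u s = T u t" using assms(3) that by blast
    moreover have "h t \<in> topspace K0" using surj that by blast
    ultimately show ?thesis by (simp add: T0_def s_def)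
  qed
  have "T0 u \<in> Cfun K0 X0" for u
  proof -
    have "continuous_map K euclidean (T0 u \<circ> h)"
      by (rule continuous_map_eq[OF embeds_into_C_continuous[OF assms(1)]]) (simp add: T0h)
    then have "continuous_map K0 euclidean (T0 u)"
      by (rule continuous_compose_quotient_map[OF assms(2)])
    moreover have "T0 u ` topspace K0 \<subseteq> X0"
      unfolding surj[symmetric] image_image using T0h assms(4) by auto
    ultimately show ?thesis by (simp add: Cfun_def T0_def)
  qed
  moreover have "Cnorm K0 (T0 u) = Cnorm K (T u)" for u
    by (rule Cnorm_eqI) (simp add: surj[symmetric] image_image T0h)
  moreover have "T0 (u + v) = (\<lambda>n. T0 u n + T0 v n)" "T0 (c *\<^sub>R u) = (\<lambda>n. c *\<^sub>R T0 u n)" for u v c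
    by (simp_all add: T0_def add scale fun_eq_iff)
  ultimately have "embeds_into_C T0 K0 X0"
    unfolding embeds_into_C_def using \<open>\<exists>A B. _\<close> by presburger
  then show ?thesis by blast
qed

lemma C_embeds_into_C_composition:
  fixes h :: "'k \<Rightarrow> 'a" and X0 :: "'x::real_normed_vector set"
  assumes "continuous_map K K0 h" and "h ` topspace K = topspace K0"
  shows "C_embeds_into_C (\<lambda>f s. if s \<in> topspace K then f (h s) else 0) K0 X0 K UNIV"
proof -
  define S :: "('a \<Rightarrow> 'x) \<Rightarrow> 'k \<Rightarrow> 'x" where "S f s = (if s \<in> topspace K then f (h s) else 0)" for f s
  have "S f \<in> Cfun K UNIV" if "f \<in> Cfun K0 X0" for f
  proof -
    have "continuous_map K euclidean (f \<circ> h)"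
      using that by (simp add: Cfun_def continuous_map_compose[OF assms(1)])
    then have "continuous_map K euclidean (S f)"
      by (rule continuous_map_eq) (simp add: S_def)
    then show ?thesis by (simp add: Cfun_def S_def)
  qed
  moreover have "Cnorm K (S f) = Cnorm K0 f" for f
    by (rule Cnorm_eqI) (simp add: S_def assms(2)[symmetric] image_image)
  ultimately have "C_embeds_into_C S K0 X0 K UNIV"
    unfolding C_embeds_into_C_def by (intro conjI exI[of _ 1]) (auto simp: S_def)
  then show ?thesis unfolding S_def[abs_def] .
qed

theorem lemma2p4:
  fixes K :: "'k topology"
  assumes "compact_space K" and "Hausdorff_space K" and "scattered_space K"
    and "separable_space (euclidean :: ('y::banach) topology)"
    and "\<exists>T :: 'y \<Rightarrow> 'k \<Rightarrow> 'x::banach. embeds_into_C T K UNIV"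
  shows "\<exists>(K0 :: nat topology) (X0 :: 'x set).
           compact_space K0 \<and> metrizable_space K0 \<and> countable (topspace K0) \<and>
           subspace X0 \<and> closed X0 \<and> separable_space (subtopology euclidean X0) \<and>
           (\<exists>T0 :: 'y \<Rightarrow> nat \<Rightarrow> 'x. embeds_into_C T0 K0 X0) \<and>
           (\<exists>S :: (nat \<Rightarrow> 'x) \<Rightarrow> ('k \<Rightarrow> 'x). C_embeds_into_C S K0 X0 K UNIV)"
proof -
  obtain T :: "'y \<Rightarrow> 'k \<Rightarrow> 'x" where T: "embeds_into_C T K UNIV" using assms(5) by blast
  obtain d :: "nat \<Rightarrow> 'y" where d: "closure (range d) = UNIV"
    using separable_space_dense_sequence[OF assms(4)] by blast
  define q where "q t = (\<lambda>n. T (d n) t)" for t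
  have "continuous_map K euclidean q"
    unfolding q_def euclidean_product_topology[symmetric] continuous_map_componentwise_UNIV
    using embeds_into_C_continuous[OF T] by blast
  then have "countable (q ` topspace K)"
    using countable_image_scattered_space assms(1,3) by blast
  then obtain K0 :: "nat topology" and h where quot: "quotient_map K K0 h"
    and K0: "compact_space K0" "metrizable_space K0" "countable (topspace K0)"
    and fibres: "\<And>s t. s \<in> topspace K \<Longrightarrow> t \<in> topspace K \<Longrightarrow> h s = h t \<longleftrightarrow> q s = q t"
    using quotient_map_onto_countable_metrizable assms(1) \<open>continuous_map K euclidean q\<close> by metis
  have "countable ((\<lambda>(m, n). m n) ` (q ` topspace K \<times> UNIV))"
    using \<open>countable (q ` topspace K)\<close> by auto
  then obtain X0 where X0: "subspace X0" "closed X0" "separable_space (subtopology euclidean X0)"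
    and samples: "(\<lambda>(m, n). m n) ` (q ` topspace K \<times> UNIV) \<subseteq> X0"
    by (rule closed_separable_subspace_superset)
  have "T u t \<in> X0" if "t \<in> topspace K" for u t
  proof -
    have "range (\<lambda>n. T (d n) t) \<subseteq> X0"
      using samples that by (force simp: q_def)
    then show ?thesis
      using embeds_into_C_in_closure_dense[OF T assms(1) d that] closure_minimal X0(2) by blast
  qed
  moreover have "T u s = T u t" if "s \<in> topspace K" "t \<in> topspace K" "h s = h t" for u s t
    using embeds_into_C_eq_if_dense_eq[OF T assms(1) d that(1,2)] fibres[OF that(1,2)] that(3)
    by (metis q_def)
  ultimately obtain T0 :: "'y \<Rightarrow> nat \<Rightarrow> 'x" where "embeds_into_C T0 K0 X0"
    using embeds_into_C_through_quotient[OF T quot] by metis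
  moreover have "C_embeds_into_C (\<lambda>f s. if s \<in> topspace K then f (h s) else 0) K0 X0 K UNIV"
    using quot by (intro C_embeds_into_C_composition quotient_imp_continuous_map quotient_imp_surjective_map)
  ultimately show ?thesis using K0 X0 by blast
qed

end
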